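(* Let $2\leq i\leq n/2$, let $e_1,\dots,e_n$ be an orthonormal basis of $\mathbb{R}^n$, and let $0<\alpha_1<\cdots<\alpha_i<\pi/2$ be such that $\pi,\alpha_1,\dots,\alpha_i$ are linearly independent over $\mathbb{Q}$. Define the $i$-dimensional subspaces $$H_1=\mathrm{lin}\{e_1,e_3,\dots,e_{2i-1}\},\qquad H_2=\mathrm{lin}\{\cos\alpha_j\, e_{2j-1}+\sin\alpha_j\, e_{2j}: j=1,\dots,i\},$$ $$H_3=\mathrm{lin}\big(\{\cos\alpha_1\, e_1+\sin\alpha_1\, e_{2i}\}\cup\{\cos\alpha_j\, e_{2j-1}+\sin\alpha_j\, e_{2j-2}: j=2,\dots,i\}\big).$$ Let $E\subset S^{n-1}$ be nonempty, closed, and such that either $R_{H_j}E=E$ for $j=1,2,3$, or $R_{H_j^\perp}E=E$ for $j=1,2,3$. Then for every $x\in E$, $S^{n-1}\cap(\mathrm{lin}\{e_1,\dots,e_{2i}\}+x)\subset E$.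
   Context: For a linear subspace $H$ of $\mathbb{R}^n$, $R_H$ is the reflection $x\mapsto 2(x|H)-x$, where $x|H$ is the orthogonal projection onto $H$; $H^\perp$ is the orthogonal complement; $\mathrm{lin}$ denotes linear hull; $S^{n-1}$ is the unit sphere. *)

theory Defs
  imports "HOL-Analysis.Analysis"
begin

definition orth_proj :: "'a::euclidean_space set \<Rightarrow> 'a \<Rightarrow> 'a" where
  "orth_proj H x = (THE y. y \<in> H \<and> (\<forall>h\<in>H. orthogonal (x - y) h))"

definition refl_sub :: "'a::euclidean_space set \<Rightarrow> 'a \<Rightarrow> 'a" where
  "refl_sub H x = 2 *\<^sub>R orth_proj H x - x"

end

(* R_H1 R_H2 rotates simultaneously by -2 alpha_j in the coordinate planes (e_(2j-1), e_(2j)),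
   and R_H1 R_H3 does the same in the planes (e_(2j-1), e_(2j-2)), with e_(2i) in the role of e_0;
   since the reflection in the orthogonal complement is -R_H, the other alternative of the
   hypothesis gives the same two compositions. As pi, alpha_1, ..., alpha_i are linearly
   independent over Q, Kronecker's theorem makes the integer powers of each composition dense in
   the torus of all simultaneous rotations of its planes, so the closed set E is invariant under
   every rotation of a single such plane, i.e. of each plane (e_k, e_(k+1)) with k < 2i.
   These rotations move any point, without changing its coordinates beyond 2i, to the point with
   vanishing coordinates 1, ..., 2i-1 and nonnegative coordinate 2i. The complement of E is
   invariant as well, so two points of the sphere whose difference lies in lin{e_1, ..., e_2i}
   are either both in E or both outside it. *)

theory Submission
  imports Defs
begin

section \<open>Reflections in linear subspaces\<close>

lemma orth_proj_eqI:
  fixes H :: "'a::euclidean_space set"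
  assumes "subspace H" "y \<in> H" "\<And>h. h \<in> H \<Longrightarrow> orthogonal (x - y) h"
  shows "orth_proj H x = y"
  unfolding orth_proj_def
proof (rule the_equality)
  fix y' assume y': "y' \<in> H \<and> (\<forall>h\<in>H. orthogonal (x - y') h)"
  have "y' - y \<in> H" using assms y' by (simp add: subspace_diff)
  then have "orthogonal (x - y) (y' - y)" "orthogonal (x - y') (y' - y)" using assms y' by auto
  then have "(y' - y) \<bullet> (y' - y) = 0"
    by (simp add: orthogonal_def algebra_simps)
  then show "y' = y" by simp
qed (use assms in blast)

lemma orth_proj_decomp:
  fixes H :: "'a::euclidean_space set"
  assumes "subspace H"
  shows "orth_proj H x \<in> H" "h \<in> H \<Longrightarrow> orthogonal (x - orth_proj H x) h"
proof -
  have "span H = H" using assms by simp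
  then obtain y z where yz: "y \<in> H" "\<And>h. h \<in> H \<Longrightarrow> orthogonal z h" "x = y + z"
    using orthogonal_subspace_decomp_exists[of H x] by metis
  then have "orth_proj H x = y" by (intro orth_proj_eqI[OF assms]) simp_all
  with yz show "orth_proj H x \<in> H" "h \<in> H \<Longrightarrow> orthogonal (x - orth_proj H x) h"
    by simp_all
qed

lemma refl_sub_uminus:
  fixes H :: "'a::euclidean_space set"
  assumes "subspace H"
  shows "refl_sub H (- x) = - refl_sub H x"
proof -
  have "orth_proj H (- x) = - orth_proj H x"
  proof (rule orth_proj_eqI[OF assms])
    show "- orth_proj H x \<in> H"
      by (rule subspace_neg[OF assms orth_proj_decomp(1)[OF assms]])
    fix h assume "h \<in> H"
    then have "orthogonal (- (x - orth_proj H x)) h"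
      by (intro orthogonal_clauses orth_proj_decomp(2)[OF assms])
    then show "orthogonal (- x - - orth_proj H x) h" by simp
  qed
  then show ?thesis unfolding refl_sub_def by simp
qed

lemma refl_sub_orthogonal_comp:
  fixes H :: "'a::euclidean_space set"
  assumes "subspace H"
  shows "refl_sub (orthogonal_comp H) x = - refl_sub H x"
proof -
  have "orth_proj (orthogonal_comp H) x = x - orth_proj H x"
    using orth_proj_decomp[OF assms]
    by (intro orth_proj_eqI subspace_orthogonal_comp) (auto simp: orthogonal_comp_def orthogonal_commute)
  moreover have "2 *\<^sub>R (x - y) - x = - (2 *\<^sub>R y - x)" for y :: 'a
    by (simp add: scaleR_2)
  ultimately show ?thesis unfolding refl_sub_def by simp
qed

lemma image_refl_sub_comp_eq:
  fixes G H :: "'a::euclidean_space set"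
  assumes "subspace G" "subspace H"
    and "(refl_sub G ` E = E \<and> refl_sub H ` E = E) \<or>
         (refl_sub (orthogonal_comp G) ` E = E \<and> refl_sub (orthogonal_comp H) ` E = E)"
  shows "(\<lambda>x. refl_sub G (refl_sub H x)) ` E = E"
proof -
  have "refl_sub (orthogonal_comp G) (refl_sub (orthogonal_comp H) x) = refl_sub G (refl_sub H x)" for x
    using assms(1,2) by (simp add: refl_sub_orthogonal_comp refl_sub_uminus)
  then have "(\<lambda>x. refl_sub G (refl_sub H x)) ` E = refl_sub G ` refl_sub H ` E"
      "(\<lambda>x. refl_sub G (refl_sub H x)) ` E = refl_sub (orthogonal_comp G) ` refl_sub (orthogonal_comp H) ` E"
    by (simp_all add: image_image)
  with assms(3) show ?thesis by (elim disjE conjE) (simp_all only:)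
qed

section \<open>Rotations in the coordinate planes of an orthonormal frame\<close>

locale orthonormal_frame =
  fixes e :: "nat \<Rightarrow> 'a::euclidean_space" and n :: nat
  assumes dim: "DIM('a) = n"
    and norm_frame: "\<forall>k\<in>{1..n}. norm (e k) = 1"
    and orthogonal_frame: "\<forall>k\<in>{1..n}. \<forall>l\<in>{1..n}. k \<noteq> l \<longrightarrow> e k \<bullet> e l = 0"
begin

lemma inner_frame: "k \<in> {1..n} \<Longrightarrow> l \<in> {1..n} \<Longrightarrow> e k \<bullet> e l = (if k = l then 1 else 0)"
  using norm_frame orthogonal_frame by (auto simp flip: power2_norm_eq_inner)

lemma span_frame: "span (e ` {1..n}) = UNIV"
proof -
  have "inj_on e {1..n}"
    by (rule inj_onI) (metis inner_frame one_neq_zero)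
  then have "dim (UNIV :: 'a set) \<le> card (e ` {1..n})"
    by (simp add: dim card_image)
  moreover have "independent (e ` {1..n})"
    by (rule pairwise_orthogonal_independent)
      (use inner_frame in \<open>fastforce simp: pairwise_def orthogonal_def\<close>)+
  ultimately show ?thesis
    using card_ge_dim_independent by blast
qed

lemma frame_eqI:
  assumes "\<And>k. k \<in> {1..n} \<Longrightarrow> v \<bullet> e k = w \<bullet> e k"
  shows "v = w"
proof -
  have "orthogonal (v - w) (v - w)"
    by (rule orthogonal_to_span[where S = "e ` {1..n}"])
      (use assms span_frame in \<open>auto simp: orthogonal_def inner_diff_left\<close>)
  then show ?thesis by (simp add: orthogonal_def)
qed

lemma inner_frame_sum: "l \<in> {1..n} \<Longrightarrow> (\<Sum>k\<in>{1..n}. c k *\<^sub>R e k) \<bullet> e l = c l"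
  by (simp add: inner_sum_left inner_frame if_distrib cong: if_cong)

lemma power2_norm_frame: "norm x ^ 2 = (\<Sum>k\<in>{1..n}. (x \<bullet> e k) ^ 2)"
proof -
  have "x = (\<Sum>k\<in>{1..n}. (x \<bullet> e k) *\<^sub>R e k)"
    by (rule frame_eqI) (simp only: inner_frame_sum)
  then have "norm x ^ 2 = x \<bullet> (\<Sum>k\<in>{1..n}. (x \<bullet> e k) *\<^sub>R e k)"
    by (metis power2_norm_eq_inner)
  then show ?thesis
    by (simp add: inner_sum_right power2_eq_square)
qed

definition plane_rot :: "nat \<Rightarrow> nat \<Rightarrow> real \<Rightarrow> 'a \<Rightarrow> 'a" where
  "plane_rot a b t x = x + ((cos t - 1) * (x \<bullet> e a) - sin t * (x \<bullet> e b)) *\<^sub>R e a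
     + (sin t * (x \<bullet> e a) + (cos t - 1) * (x \<bullet> e b)) *\<^sub>R e b"

lemma inner_plane_rot:
  assumes "a \<in> {1..n}" "b \<in> {1..n}" "a \<noteq> b" "k \<in> {1..n}"
  shows "plane_rot a b t x \<bullet> e k =
    (if k = a then cos t * (x \<bullet> e a) - sin t * (x \<bullet> e b)
     else if k = b then sin t * (x \<bullet> e a) + cos t * (x \<bullet> e b) else x \<bullet> e k)"
  using assms by (auto simp: plane_rot_def inner_frame algebra_simps)

lemma plane_rot_swap: "plane_rot b a (- t) = plane_rot a b t"
  by (auto simp: plane_rot_def algebra_simps)

lemma plane_rot_inverse:
  assumes "a \<in> {1..n}" "b \<in> {1..n}" "a \<noteq> b"
  shows "plane_rot a b (- t) (plane_rot a b t x) = x"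
proof (rule frame_eqI)
  have undo: "cos t * (cos t * p - sin t * q) + sin t * (sin t * p + cos t * q) = p"
      "cos t * (sin t * p + cos t * q) - sin t * (cos t * p - sin t * q) = q" for p q
    using sin_cos_squared_add[of t] by algebra+
  fix k assume "k \<in> {1..n}"
  then show "plane_rot a b (- t) (plane_rot a b t x) \<bullet> e k = x \<bullet> e k"
    using assms by (simp add: inner_plane_rot undo)
qed

lemma plane_rot_clear_coordinate:
  assumes "a \<in> {1..n}" "b \<in> {1..n}" "a \<noteq> b"
  obtains t where "plane_rot a b t w \<bullet> e a = 0"
    "(plane_rot a b t w \<bullet> e b)\<^sup>2 = (w \<bullet> e a)\<^sup>2 + (w \<bullet> e b)\<^sup>2"
proof -
  define p q where "p = w \<bullet> e a" and "q = w \<bullet> e b"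
  obtain t where t: "cos t * p - sin t * q = 0"
  proof (cases "q = 0")
    case True
    then show ?thesis using that[of "pi / 2"] by simp
  next
    case False
    then show ?thesis using that[of "arctan (p / q)"]
      by (simp add: sin_arctan cos_arctan field_simps)
  qed
  have "(cos t * p - sin t * q)\<^sup>2 + (sin t * p + cos t * q)\<^sup>2 = p\<^sup>2 + q\<^sup>2"
    using sin_cos_squared_add[of t] by algebra
  with t have "(sin t * p + cos t * q)\<^sup>2 = p\<^sup>2 + q\<^sup>2" by simp
  with t show ?thesis
    using that[of t] assms by (simp add: inner_plane_rot p_def q_def)
qed

definition adj_rot_invariant :: "nat \<Rightarrow> 'a set \<Rightarrow> bool" where
  "adj_rot_invariant m F \<longleftrightarrow> (\<forall>k\<in>{1..<m}. \<forall>t. \<forall>x\<in>F. plane_rot k (Suc k) t x \<in> F)"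

lemma adj_rot_invariantD:
  "adj_rot_invariant m F \<Longrightarrow> k \<in> {1..<m} \<Longrightarrow> x \<in> F \<Longrightarrow> plane_rot k (Suc k) t x \<in> F"
  unfolding adj_rot_invariant_def by blast

lemma adj_rot_invariant_Suc: "adj_rot_invariant (Suc m) F \<Longrightarrow> adj_rot_invariant m F"
  unfolding adj_rot_invariant_def by auto

lemma adj_rot_invariant_Compl:
  assumes "m \<le> n" "adj_rot_invariant m F"
  shows "adj_rot_invariant m (- F)"
  unfolding adj_rot_invariant_def
proof (intro ballI allI)
  fix k t x assume k: "k \<in> {1..<m}" and x: "x \<in> - F"
  have "plane_rot k (Suc k) (- t) (plane_rot k (Suc k) t x) = x"
    using k assms(1) by (intro plane_rot_inverse) auto
  with x show "plane_rot k (Suc k) t x \<in> - F"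
    using adj_rot_invariantD[OF assms(2) k, of _ "- t"] by (metis ComplD ComplI)
qed

lemma adj_rot_invariant_rotate_to_axis_sq:
  assumes "1 \<le> m" "m \<le> n" "adj_rot_invariant m F" "x \<in> F"
  shows "\<exists>w\<in>F. (\<forall>k\<in>{1..<m}. w \<bullet> e k = 0) \<and> (w \<bullet> e m)\<^sup>2 = (\<Sum>k\<in>{1..m}. (x \<bullet> e k)\<^sup>2)
      \<and> (\<forall>k\<in>{m<..n}. w \<bullet> e k = x \<bullet> e k)"
  using assms(1-3)
proof (induction m)
  case (Suc m)
  show ?case
  proof (cases "m = 0")
    case True
    then show ?thesis using \<open>x \<in> F\<close> by auto
  next
    case False
    with Suc obtain w where w: "w \<in> F" "\<forall>k\<in>{1..<m}. w \<bullet> e k = 0"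
        "(w \<bullet> e m)\<^sup>2 = (\<Sum>k\<in>{1..m}. (x \<bullet> e k)\<^sup>2)" "\<forall>k\<in>{m<..n}. w \<bullet> e k = x \<bullet> e k"
      using adj_rot_invariant_Suc by auto
    have m: "m \<in> {1..n}" "Suc m \<in> {1..n}" "m \<noteq> Suc m" using Suc False by auto
    obtain t where t: "plane_rot m (Suc m) t w \<bullet> e m = 0"
        "(plane_rot m (Suc m) t w \<bullet> e (Suc m))\<^sup>2 = (w \<bullet> e m)\<^sup>2 + (w \<bullet> e (Suc m))\<^sup>2"
      using plane_rot_clear_coordinate[OF m] .
    have "plane_rot m (Suc m) t w \<in> F"
      using Suc.prems(3) w(1) m by (auto intro: adj_rot_invariantD)
    moreover have "\<forall>k\<in>{1..<Suc m}. plane_rot m (Suc m) t w \<bullet> e k = 0"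
      using t(1) w(2) m by (auto simp: inner_plane_rot less_Suc_eq)
    moreover have "(plane_rot m (Suc m) t w \<bullet> e (Suc m))\<^sup>2 = (\<Sum>k\<in>{1..Suc m}. (x \<bullet> e k)\<^sup>2)"
      using t(2) w(3,4) m by simp
    moreover have "\<forall>k\<in>{Suc m<..n}. plane_rot m (Suc m) t w \<bullet> e k = x \<bullet> e k"
      using w(4) m by (simp add: inner_plane_rot)
    ultimately show ?thesis by blast
  qed
qed simp

lemma adj_rot_invariant_rotate_to_axis:
  assumes "2 \<le> m" "m \<le> n" "adj_rot_invariant m F" "x \<in> F"
  shows "\<exists>w\<in>F. (\<forall>k\<in>{1..<m}. w \<bullet> e k = 0) \<and> w \<bullet> e m = sqrt (\<Sum>k\<in>{1..m}. (x \<bullet> e k)\<^sup>2)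
      \<and> (\<forall>k\<in>{m<..n}. w \<bullet> e k = x \<bullet> e k)"
proof -
  obtain w where w: "w \<in> F" "\<forall>k\<in>{1..<m}. w \<bullet> e k = 0"
      "(w \<bullet> e m)\<^sup>2 = (\<Sum>k\<in>{1..m}. (x \<bullet> e k)\<^sup>2)" "\<forall>k\<in>{m<..n}. w \<bullet> e k = x \<bullet> e k"
    using adj_rot_invariant_rotate_to_axis_sq[of m F x] assms by auto
  have sqrt: "sqrt (\<Sum>k\<in>{1..m}. (x \<bullet> e k)\<^sup>2) = \<bar>w \<bullet> e m\<bar>"
    using w(3) by (metis real_sqrt_abs)
  show ?thesis
  proof (cases "w \<bullet> e m \<ge> 0")
    case True
    with w sqrt show ?thesis by auto
  next
    case False
    have m: "m - 1 \<in> {1..n}" "m \<in> {1..n}" "m - 1 \<noteq> m" "Suc (m - 1) = m" using assms by auto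
    have "plane_rot (m - 1) m pi w \<in> F"
      using adj_rot_invariantD[OF assms(3), of "m - 1" w pi] w(1) m assms(1) by auto
    moreover have "plane_rot (m - 1) m pi w \<bullet> e k = (if k = m then - (w \<bullet> e m) else w \<bullet> e k)"
      if "k \<in> {1..n}" for k
      using that m w(2) by (auto simp: inner_plane_rot)
    ultimately show ?thesis
      using w sqrt False m(2) by (intro bexI[of _ "plane_rot (m - 1) m pi w"]) auto
  qed
qed

lemma adj_rot_invariant_slice:
  assumes "2 \<le> m" "m \<le> n" "adj_rot_invariant m F" "x \<in> F"
    and "norm y = norm x" "y - x \<in> span (e ` {1..m})"
  shows "y \<in> F"
proof (rule ccontr)
  assume "y \<notin> F"
  have tail: "y \<bullet> e k = x \<bullet> e k" if "k \<in> {m<..n}" for k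
  proof -
    have "orthogonal (e k) (y - x)"
      by (rule orthogonal_to_span[OF assms(6)]) (use that inner_frame in \<open>auto simp: orthogonal_def\<close>)
    then show ?thesis by (simp add: orthogonal_def inner_diff_right inner_commute)
  qed
  have split: "(\<Sum>k\<in>{1..n}. f k) = (\<Sum>k\<in>{1..m}. f k) + (\<Sum>k\<in>{m<..n}. f k)" for f :: "nat \<Rightarrow> real"
  proof -
    have "{1..n} = {1..m} \<union> {m<..n}" using assms(1,2) by auto
    then show ?thesis by (simp add: sum.union_disjoint[symmetric] ivl_disj_int)
  qed
  have head: "(\<Sum>k\<in>{1..m}. (y \<bullet> e k)\<^sup>2) = (\<Sum>k\<in>{1..m}. (x \<bullet> e k)\<^sup>2)"
    using power2_norm_frame[of x] power2_norm_frame[of y] assms(5) tail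
    unfolding split by simp
  obtain w where w: "w \<in> F" "\<forall>k\<in>{1..<m}. w \<bullet> e k = 0"
      "w \<bullet> e m = sqrt (\<Sum>k\<in>{1..m}. (x \<bullet> e k)\<^sup>2)" "\<forall>k\<in>{m<..n}. w \<bullet> e k = x \<bullet> e k"
    using adj_rot_invariant_rotate_to_axis[OF assms(1-4)] by blast
  obtain w' where w': "w' \<in> - F" "\<forall>k\<in>{1..<m}. w' \<bullet> e k = 0"
      "w' \<bullet> e m = sqrt (\<Sum>k\<in>{1..m}. (y \<bullet> e k)\<^sup>2)" "\<forall>k\<in>{m<..n}. w' \<bullet> e k = y \<bullet> e k"
    using adj_rot_invariant_rotate_to_axis[OF assms(1,2) adj_rot_invariant_Compl[OF assms(2,3)]]
      \<open>y \<notin> F\<close> by blast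
  have "w = w'"
  proof (rule frame_eqI)
    fix k assume "k \<in> {1..n}"
    then consider "k \<in> {1..<m}" | "k = m" | "k \<in> {m<..n}" by fastforce
    then show "w \<bullet> e k = w' \<bullet> e k"
      by cases (use w w' head tail in auto)
  qed
  with w w' show False by simp
qed

end

section \<open>Simultaneous rotations in disjoint coordinate planes\<close>

locale plane_pairs = orthonormal_frame e n for e :: "nat \<Rightarrow> 'a::euclidean_space" and n +
  fixes i :: nat and p q :: "nat \<Rightarrow> nat"
  assumes p_range: "j \<in> {1..i} \<Longrightarrow> p j \<in> {1..n}" and q_range: "j \<in> {1..i} \<Longrightarrow> q j \<in> {1..n}"
    and inj_p: "inj_on p {1..i}" and inj_q: "inj_on q {1..i}"
    and p_neq_q: "j \<in> {1..i} \<Longrightarrow> l \<in> {1..i} \<Longrightarrow> p j \<noteq> q l"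
begin

lemma p_eq_iff: "j \<in> {1..i} \<Longrightarrow> l \<in> {1..i} \<Longrightarrow> p j = p l \<longleftrightarrow> j = l"
  using inj_p by (auto dest: inj_onD)

lemma q_eq_iff: "j \<in> {1..i} \<Longrightarrow> l \<in> {1..i} \<Longrightarrow> q j = q l \<longleftrightarrow> j = l"
  using inj_q by (auto dest: inj_onD)

definition pair_comb :: "(nat \<Rightarrow> real) \<Rightarrow> (nat \<Rightarrow> real) \<Rightarrow> 'a" where
  "pair_comb f g = (\<Sum>j\<in>{1..i}. f j *\<^sub>R e (p j) + g j *\<^sub>R e (q j))"

lemma inner_pair_comb_p:
  assumes "j \<in> {1..i}"
  shows "pair_comb f g \<bullet> e (p j) = f j"
proof -
  have "pair_comb f g \<bullet> e (p j) = (\<Sum>l\<in>{1..i}. if l = j then f l else 0)"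
    unfolding pair_comb_def inner_sum_left
    by (rule sum.cong) (use assms p_range q_range in \<open>auto simp: inner_add_left inner_frame p_eq_iff p_neq_q[symmetric]\<close>)
  with assms show ?thesis by simp
qed

lemma inner_pair_comb_q:
  assumes "j \<in> {1..i}"
  shows "pair_comb f g \<bullet> e (q j) = g j"
proof -
  have "pair_comb f g \<bullet> e (q j) = (\<Sum>l\<in>{1..i}. if l = j then g l else 0)"
    unfolding pair_comb_def inner_sum_left
    by (rule sum.cong) (use assms p_range q_range in \<open>auto simp: inner_add_left inner_frame q_eq_iff p_neq_q\<close>)
  with assms show ?thesis by simp
qed

lemma inner_pair_comb_other:
  "k \<in> {1..n} \<Longrightarrow> k \<notin> p ` {1..i} \<Longrightarrow> k \<notin> q ` {1..i} \<Longrightarrow> pair_comb f g \<bullet> e k = 0"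
  unfolding pair_comb_def inner_sum_left
  by (rule sum.neutral) (use p_range q_range inner_frame in \<open>force simp: inner_add_left\<close>)

lemma pair_frame_eqI:
  assumes "\<And>j. j \<in> {1..i} \<Longrightarrow> v \<bullet> e (p j) = w \<bullet> e (p j)"
    and "\<And>j. j \<in> {1..i} \<Longrightarrow> v \<bullet> e (q j) = w \<bullet> e (q j)"
    and "\<And>k. k \<in> {1..n} \<Longrightarrow> k \<notin> p ` {1..i} \<Longrightarrow> k \<notin> q ` {1..i} \<Longrightarrow> v \<bullet> e k = w \<bullet> e k"
  shows "v = w"
  by (rule frame_eqI) (use assms in blast)

definition torus_rot :: "(nat \<Rightarrow> real) \<Rightarrow> 'a \<Rightarrow> 'a" where
  "torus_rot \<phi> x = x + pair_comb
     (\<lambda>j. (cos (\<phi> j) - 1) * (x \<bullet> e (p j)) - sin (\<phi> j) * (x \<bullet> e (q j)))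
     (\<lambda>j. sin (\<phi> j) * (x \<bullet> e (p j)) + (cos (\<phi> j) - 1) * (x \<bullet> e (q j)))"

lemma inner_torus_rot_p:
  "j \<in> {1..i} \<Longrightarrow> torus_rot \<phi> x \<bullet> e (p j) = cos (\<phi> j) * (x \<bullet> e (p j)) - sin (\<phi> j) * (x \<bullet> e (q j))"
  by (simp add: torus_rot_def inner_pair_comb_p algebra_simps)

lemma inner_torus_rot_q:
  "j \<in> {1..i} \<Longrightarrow> torus_rot \<phi> x \<bullet> e (q j) = sin (\<phi> j) * (x \<bullet> e (p j)) + cos (\<phi> j) * (x \<bullet> e (q j))"
  by (simp add: torus_rot_def inner_pair_comb_q algebra_simps)

lemma inner_torus_rot_other:
  "k \<in> {1..n} \<Longrightarrow> k \<notin> p ` {1..i} \<Longrightarrow> k \<notin> q ` {1..i} \<Longrightarrow> torus_rot \<phi> x \<bullet> e k = x \<bullet> e k"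
  unfolding torus_rot_def inner_add_left by (simp add: inner_pair_comb_other)

lemma torus_rot_zero: "torus_rot (\<lambda>j. 0) x = x"
  by (simp add: torus_rot_def pair_comb_def)

lemma torus_rot_add: "torus_rot \<phi> (torus_rot \<psi> x) = torus_rot (\<lambda>j. \<phi> j + \<psi> j) x"
  by (rule pair_frame_eqI)
    (simp_all add: inner_torus_rot_p inner_torus_rot_q inner_torus_rot_other cos_add sin_add algebra_simps)

lemma torus_rot_shift_2pi: "torus_rot (\<lambda>j. \<phi> j + 2 * pi * of_int (m j)) = torus_rot \<phi>"
proof -
  have "sin (\<phi> j + 2 * pi * of_int (m j)) = sin (\<phi> j) \<and> cos (\<phi> j + 2 * pi * of_int (m j)) = cos (\<phi> j)"
    for j using sin_cos_eq_iff by blast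
  then show ?thesis by (intro ext) (simp add: torus_rot_def)
qed

lemma plane_rot_eq_torus_rot:
  assumes j: "j \<in> {1..i}"
  shows "plane_rot (p j) (q j) t = torus_rot (\<lambda>l. if l = j then t else 0)"
proof
  fix x
  have r: "p j \<in> {1..n}" "q j \<in> {1..n}" "p j \<noteq> q j" using j p_range q_range p_neq_q by auto
  show "plane_rot (p j) (q j) t x = torus_rot (\<lambda>l. if l = j then t else 0) x"
  proof (rule pair_frame_eqI)
    fix l assume l: "l \<in> {1..i}"
    then have "p l \<in> {1..n}" "q l \<in> {1..n}" "p l \<noteq> q j" "q l \<noteq> p j"
      using j p_range q_range p_neq_q[of l j] p_neq_q[of j l] by auto
    with l j r show "plane_rot (p j) (q j) t x \<bullet> e (p l) = torus_rot (\<lambda>l. if l = j then t else 0) x \<bullet> e (p l)"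
        "plane_rot (p j) (q j) t x \<bullet> e (q l) = torus_rot (\<lambda>l. if l = j then t else 0) x \<bullet> e (q l)"
      by (auto simp: inner_plane_rot inner_torus_rot_p inner_torus_rot_q p_eq_iff q_eq_iff)
  next
    fix k assume "k \<in> {1..n}" "k \<notin> p ` {1..i}" "k \<notin> q ` {1..i}"
    with j r show "plane_rot (p j) (q j) t x \<bullet> e k = torus_rot (\<lambda>l. if l = j then t else 0) x \<bullet> e k"
      by (auto simp: inner_plane_rot inner_torus_rot_other)
  qed
qed

definition tilt :: "(nat \<Rightarrow> real) \<Rightarrow> nat \<Rightarrow> 'a" where
  "tilt \<alpha> j = cos (\<alpha> j) *\<^sub>R e (p j) + sin (\<alpha> j) *\<^sub>R e (q j)"

lemma orth_proj_span_p:
  "orth_proj (span ((\<lambda>j. e (p j)) ` {1..i})) x = pair_comb (\<lambda>j. x \<bullet> e (p j)) (\<lambda>j. 0)"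
proof (rule orth_proj_eqI)
  show "pair_comb (\<lambda>j. x \<bullet> e (p j)) (\<lambda>j. 0) \<in> span ((\<lambda>j. e (p j)) ` {1..i})"
    unfolding pair_comb_def by (rule span_sum) (simp add: span_scale span_base)
  fix h assume "h \<in> span ((\<lambda>j. e (p j)) ` {1..i})"
  then show "orthogonal (x - pair_comb (\<lambda>j. x \<bullet> e (p j)) (\<lambda>j. 0)) h"
    by (rule orthogonal_to_span) (auto simp: orthogonal_def inner_diff_left inner_pair_comb_p)
qed simp

lemma orth_proj_span_tilt:
  "orth_proj (span (tilt \<alpha> ` {1..i})) x =
     pair_comb (\<lambda>j. (x \<bullet> tilt \<alpha> j) * cos (\<alpha> j)) (\<lambda>j. (x \<bullet> tilt \<alpha> j) * sin (\<alpha> j))"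
proof (rule orth_proj_eqI)
  have "pair_comb (\<lambda>j. (x \<bullet> tilt \<alpha> j) * cos (\<alpha> j)) (\<lambda>j. (x \<bullet> tilt \<alpha> j) * sin (\<alpha> j)) =
      (\<Sum>j\<in>{1..i}. (x \<bullet> tilt \<alpha> j) *\<^sub>R tilt \<alpha> j)"
    by (simp add: pair_comb_def tilt_def scaleR_add_right)
  moreover have "(\<Sum>j\<in>{1..i}. (x \<bullet> tilt \<alpha> j) *\<^sub>R tilt \<alpha> j) \<in> span (tilt \<alpha> ` {1..i})"
    by (rule span_sum) (simp add: span_scale span_base)
  ultimately show "pair_comb (\<lambda>j. (x \<bullet> tilt \<alpha> j) * cos (\<alpha> j)) (\<lambda>j. (x \<bullet> tilt \<alpha> j) * sin (\<alpha> j))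
      \<in> span (tilt \<alpha> ` {1..i})"
    by simp
  fix h assume "h \<in> span (tilt \<alpha> ` {1..i})"
  then show "orthogonal (x - pair_comb (\<lambda>j. (x \<bullet> tilt \<alpha> j) * cos (\<alpha> j))
      (\<lambda>j. (x \<bullet> tilt \<alpha> j) * sin (\<alpha> j))) h"
  proof (rule orthogonal_to_span)
    fix y assume "y \<in> tilt \<alpha> ` {1..i}"
    then obtain l where l: "l \<in> {1..i}" "y = tilt \<alpha> l" by auto
    have "cos a * (u - (cos a * u + sin a * w) * cos a) + sin a * (w - (cos a * u + sin a * w) * sin a) = 0"
      for a u w :: real
      using sin_cos_squared_add[of a] by algebra
    with l show "orthogonal (x - pair_comb (\<lambda>j. (x \<bullet> tilt \<alpha> j) * cos (\<alpha> j))
        (\<lambda>j. (x \<bullet> tilt \<alpha> j) * sin (\<alpha> j))) y"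
      by (simp add: orthogonal_def tilt_def inner_add_right inner_diff_left inner_pair_comb_p
          inner_pair_comb_q)
  qed
qed simp

lemma refl_sub_span_p_tilt_eq_torus_rot:
  "refl_sub (span ((\<lambda>j. e (p j)) ` {1..i})) (refl_sub (span (tilt \<alpha> ` {1..i})) x) =
     torus_rot (\<lambda>j. - 2 * \<alpha> j) x"
proof (rule pair_frame_eqI)
  have inner_tilt: "v \<bullet> tilt \<alpha> j = cos (\<alpha> j) * (v \<bullet> e (p j)) + sin (\<alpha> j) * (v \<bullet> e (q j))" for v j
    by (simp add: tilt_def inner_add_right)
  fix j assume j: "j \<in> {1..i}"
  then show "refl_sub (span ((\<lambda>j. e (p j)) ` {1..i})) (refl_sub (span (tilt \<alpha> ` {1..i})) x) \<bullet> e (p j) =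
      torus_rot (\<lambda>j. - 2 * \<alpha> j) x \<bullet> e (p j)"
    "refl_sub (span ((\<lambda>j. e (p j)) ` {1..i})) (refl_sub (span (tilt \<alpha> ` {1..i})) x) \<bullet> e (q j) =
      torus_rot (\<lambda>j. - 2 * \<alpha> j) x \<bullet> e (q j)"
    unfolding refl_sub_def orth_proj_span_p orth_proj_span_tilt
    by (simp_all add: inner_diff_left inner_pair_comb_p inner_pair_comb_q inner_torus_rot_p
        inner_torus_rot_q inner_tilt cos_double sin_double)
      (use sin_cos_squared_add[of "\<alpha> j"] in algebra)+
next
  fix k assume "k \<in> {1..n}" "k \<notin> p ` {1..i}" "k \<notin> q ` {1..i}"
  then show "refl_sub (span ((\<lambda>j. e (p j)) ` {1..i})) (refl_sub (span (tilt \<alpha> ` {1..i})) x) \<bullet> e k =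
      torus_rot (\<lambda>j. - 2 * \<alpha> j) x \<bullet> e k"
    unfolding refl_sub_def orth_proj_span_p orth_proj_span_tilt
    by (simp add: inner_diff_left inner_pair_comb_other inner_torus_rot_other)
qed

end

section \<open>Kronecker approximation for angles independent of pi\<close>

definition rat_independent_with_pi :: "nat \<Rightarrow> (nat \<Rightarrow> real) \<Rightarrow> bool" where
  "rat_independent_with_pi i \<alpha> \<longleftrightarrow> (\<forall>(c0::rat) (c::nat \<Rightarrow> rat).
     of_rat c0 * pi + (\<Sum>j=1..i. of_rat (c j) * \<alpha> j) = 0 \<longrightarrow> c0 = 0 \<and> (\<forall>j\<in>{1..i}. c j = 0))"

text \<open>The numbers \<open>\<alpha>\<^sub>1/\<pi>, \<dots>, \<alpha>\<^sub>i/\<pi>, 1\<close>, indexed by \<open>{..i}\<close> as Kronecker_thm_2 expects.\<close>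
definition pi_ratios :: "nat \<Rightarrow> (nat \<Rightarrow> real) \<Rightarrow> nat \<Rightarrow> real" where
  "pi_ratios i \<alpha> l = (if l = i then 1 else \<alpha> (Suc l) / pi)"

lemma pi_ratios_int_relation_trivial:
  assumes "rat_independent_with_pi i \<alpha>"
    and "(\<Sum>l\<le>i. of_int (w l) * pi_ratios i \<alpha> l) = 0"
  shows "l \<le> i \<Longrightarrow> w l = 0"
proof -
  have "(\<Sum>l\<le>i. of_int (w l) * pi_ratios i \<alpha> l) =
      (\<Sum>l<i. of_int (w l) * \<alpha> (Suc l)) / pi + of_int (w i)"
    by (simp add: lessThan_Suc_atMost[symmetric] pi_ratios_def sum_divide_distrib)
  also have "(\<Sum>l<i. of_int (w l) * \<alpha> (Suc l)) = (\<Sum>j=1..i. of_int (w (j - 1)) * \<alpha> j)"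
    using sum_bounds_lt_plus1[of "\<lambda>j. of_int (w (j - 1)) * \<alpha> j" i] by simp
  finally have "of_rat (of_int (w i)) * pi + (\<Sum>j=1..i. of_rat (of_int (w (j - 1))) * \<alpha> j) = 0"
    using assms(2) by (simp add: field_simps)
  with assms(1) have "w i = 0" "\<forall>j\<in>{1..i}. w (j - 1) = 0"
    unfolding rat_independent_with_pi_def by (fastforce dest: spec[of _ "of_int (w i)"])+
  moreover assume "l \<le> i"
  ultimately show "w l = 0"
    by (cases "l = i") (auto dest: bspec[of _ _ "Suc l"])
qed

lemma inj_on_pi_ratios:
  assumes "rat_independent_with_pi i \<alpha>"
  shows "inj_on (pi_ratios i \<alpha>) {..i}"
proof (rule inj_onI, rule ccontr)
  fix a b assume ab: "a \<in> {..i}" "b \<in> {..i}" "pi_ratios i \<alpha> a = pi_ratios i \<alpha> b" "a \<noteq> b"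
  define w :: "nat \<Rightarrow> int" where "w l = of_bool (l = a) - of_bool (l = b)" for l
  have "(\<Sum>l\<le>i. of_int (w l) * pi_ratios i \<alpha> l) =
      (\<Sum>l\<le>i. if l = a then pi_ratios i \<alpha> l else 0) - (\<Sum>l\<le>i. if l = b then pi_ratios i \<alpha> l else 0)"
    unfolding sum_subtractf[symmetric] by (rule sum.cong) (auto simp: w_def)
  also have "\<dots> = 0" using ab by simp
  finally have "w a = 0" using ab by (intro pi_ratios_int_relation_trivial[OF assms]) auto
  with ab(4) show False by (simp add: w_def)
qed

lemma independent_pi_ratios:
  assumes "rat_independent_with_pi i \<alpha>"
  shows "module.independent (\<lambda>r x. of_int r * x) (pi_ratios i \<alpha> ` {..i})"
proof -
  interpret Modules.module "\<lambda>r. (*) (real_of_int r)"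
    by unfold_locales (simp_all add: distrib_left distrib_right)
  show ?thesis
    unfolding independent_explicit_module
  proof (intro allI impI)
    fix T u v
    assume T: "finite T" "T \<subseteq> pi_ratios i \<alpha> ` {..i}" "(\<Sum>v\<in>T. of_int (u v) * v) = 0" "v \<in> T"
    define w where "w l = (if pi_ratios i \<alpha> l \<in> T then u (pi_ratios i \<alpha> l) else 0)" for l
    have "(\<Sum>l\<le>i. of_int (w l) * pi_ratios i \<alpha> l) =
        (\<Sum>x\<in>pi_ratios i \<alpha> ` {..i}. if x \<in> T then of_int (u x) * x else 0)"
      by (subst sum.reindex[OF inj_on_pi_ratios[OF assms]]) (auto simp: w_def intro!: sum.cong)
    also have "\<dots> = (\<Sum>x\<in>T. of_int (u x) * x)"
      using T(2) by (simp add: sum.inter_restrict[symmetric] Int_absorb1)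
    finally have "\<forall>l\<le>i. w l = 0"
      using pi_ratios_int_relation_trivial[OF assms] T(3) by simp
    moreover obtain l where "l \<le> i" "v = pi_ratios i \<alpha> l" using T(2,4) by blast
    ultimately show "u v = 0" using T(4) by (auto simp: w_def)
  qed
qed

lemma rat_independent_with_pi_approx:
  assumes "rat_independent_with_pi i \<alpha>" "\<epsilon> > 0"
  shows "\<exists>(k::int) (m::nat \<Rightarrow> int). \<forall>j\<in>{1..i}.
    \<bar>of_int k * (2 * \<alpha> j) - 2 * pi * of_int (m j) - \<phi> j\<bar> < \<epsilon>"
proof -
  obtain k m where km: "\<And>l. l < i \<Longrightarrow>
      \<bar>of_int k * pi_ratios i \<alpha> l - of_int (m l) - \<phi> (Suc l) / (2 * pi)\<bar> < \<epsilon> / (2 * pi)"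
    using Kronecker_thm_2[OF independent_pi_ratios[OF assms(1)] inj_on_pi_ratios[OF assms(1)],
        where \<alpha> = "\<lambda>l. \<phi> (Suc l) / (2 * pi)" and \<epsilon> = "\<epsilon> / (2 * pi)"]
      assms(2) by (auto simp: pi_ratios_def)
  have "\<forall>j\<in>{1..i}. \<bar>of_int k * (2 * \<alpha> j) - 2 * pi * of_int (m (j - 1)) - \<phi> j\<bar> < \<epsilon>"
  proof
    fix j assume j: "j \<in> {1..i}"
    from j have "j - 1 < i" by auto
    have "of_int k * (2 * \<alpha> j) - 2 * pi * of_int (m (j - 1)) - \<phi> j =
        2 * pi * (of_int k * pi_ratios i \<alpha> (j - 1) - of_int (m (j - 1)) - \<phi> (Suc (j - 1)) / (2 * pi))"
      using j by (auto simp: pi_ratios_def field_simps)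
    also have "\<bar>\<dots>\<bar> < 2 * pi * (\<epsilon> / (2 * pi))"
      using mult_strict_left_mono[OF km[OF \<open>j - 1 < i\<close>], of "2 * pi"] by (simp add: abs_mult)
    finally show "\<bar>of_int k * (2 * \<alpha> j) - 2 * pi * of_int (m (j - 1)) - \<phi> j\<bar> < \<epsilon>"
      by simp
  qed
  then show ?thesis by (intro exI[of _ k] exI[of _ "\<lambda>j. m (j - 1)"])
qed

context plane_pairs
begin

lemma torus_rot_image_int_mult:
  assumes "torus_rot \<phi> ` F = F"
  shows "torus_rot (\<lambda>j. of_int k * \<phi> j) ` F = F"
proof -
  have nat_mult: "torus_rot (\<lambda>j. real m * \<psi> j) ` F = F" if "torus_rot \<psi> ` F = F" for \<psi> m
  proof (induction m)
    case 0
    then show ?case by (simp add: torus_rot_zero)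
  next
    case (Suc m)
    have "torus_rot (\<lambda>j. real (Suc m) * \<psi> j) = torus_rot \<psi> \<circ> torus_rot (\<lambda>j. real m * \<psi> j)"
      by (auto simp: torus_rot_add algebra_simps)
    then have "torus_rot (\<lambda>j. real (Suc m) * \<psi> j) ` F = torus_rot \<psi> ` torus_rot (\<lambda>j. real m * \<psi> j) ` F"
      by (simp add: image_comp)
    with Suc.IH that show ?case by simp
  qed
  have "torus_rot (\<lambda>j. - \<phi> j) ` F = torus_rot (\<lambda>j. - \<phi> j) ` torus_rot \<phi> ` F"
    using assms by simp
  also have "\<dots> = F"
    by (simp add: image_image torus_rot_add torus_rot_zero)
  finally have "torus_rot (\<lambda>j. - \<phi> j) ` F = F" .
  with assms nat_mult[of \<phi> "nat k"] nat_mult[of "\<lambda>j. - \<phi> j" "nat (- k)"] show ?thesis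
    by (cases "k \<ge> 0") simp_all
qed

lemma tendsto_torus_rot:
  assumes "\<And>j. j \<in> {1..i} \<Longrightarrow> (\<lambda>N. \<phi> N j) \<longlonglongrightarrow> \<psi> j"
  shows "(\<lambda>N. torus_rot (\<phi> N) x) \<longlonglongrightarrow> torus_rot \<psi> x"
  unfolding torus_rot_def pair_comb_def
  by (intro tendsto_intros) (use assms in auto)

lemma closed_torus_rot_mem:
  assumes "rat_independent_with_pi i \<alpha>" "closed F"
    and "torus_rot (\<lambda>j. - 2 * \<alpha> j) ` F = F" "x \<in> F"
  shows "torus_rot \<psi> x \<in> F"
proof -
  have "\<exists>k m. \<forall>j\<in>{1..i}. \<bar>of_int k * (2 * \<alpha> j) - 2 * pi * of_int (m j) - \<psi> j\<bar> < inverse (Suc N)"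
    for N
    by (rule rat_independent_with_pi_approx[OF assms(1)]) simp
  then obtain k m where km: "\<And>N j. j \<in> {1..i} \<Longrightarrow>
      \<bar>of_int (k N) * (2 * \<alpha> j) - 2 * pi * of_int (m N j) - \<psi> j\<bar> < inverse (Suc N)"
    by metis
  define \<phi> where "\<phi> N = (\<lambda>j. of_int (k N) * (2 * \<alpha> j) - 2 * pi * of_int (m N j))" for N
  have mem: "torus_rot (\<phi> N) x \<in> F" for N
  proof -
    have "torus_rot (\<phi> N) = torus_rot (\<lambda>j. of_int (- k N) * (- 2 * \<alpha> j))"
      using torus_rot_shift_2pi[of "\<lambda>j. of_int (- k N) * (- 2 * \<alpha> j)" "\<lambda>j. - m N j"]
      by (simp add: \<phi>_def)
    moreover have "torus_rot (\<lambda>j. of_int (- k N) * (- 2 * \<alpha> j)) x \<in> F"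
      using imageI[OF assms(4), where f = "torus_rot (\<lambda>j. of_int (- k N) * (- 2 * \<alpha> j))"]
      unfolding torus_rot_image_int_mult[OF assms(3), of "- k N"] .
    ultimately show ?thesis by simp
  qed
  have conv: "(\<lambda>N. torus_rot (\<phi> N) x) \<longlonglongrightarrow> torus_rot \<psi> x"
  proof (rule tendsto_torus_rot)
    fix j assume j: "j \<in> {1..i}"
    have "norm (\<phi> N j - \<psi> j) \<le> inverse (Suc N)" for N
      using km[OF j, of N] by (simp add: \<phi>_def)
    then have "(\<lambda>N. \<phi> N j - \<psi> j) \<longlonglongrightarrow> 0"
      by (intro Lim_null_comparison[OF always_eventually LIMSEQ_inverse_real_of_nat]) auto
    then show "(\<lambda>N. \<phi> N j) \<longlonglongrightarrow> \<psi> j" by (rule LIM_zero_cancel)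
  qed
  show ?thesis
    using closed_sequentially[OF assms(2) _ conv] mem by blast
qed

lemma closed_plane_rot_mem:
  assumes "rat_independent_with_pi i \<alpha>" "closed F"
    and "torus_rot (\<lambda>j. - 2 * \<alpha> j) ` F = F" "x \<in> F" "j \<in> {1..i}"
  shows "plane_rot (p j) (q j) t x \<in> F"
  using closed_torus_rot_mem[OF assms(1-4)] plane_rot_eq_torus_rot[OF assms(5)] by simp

end

context orthonormal_frame
begin

lemma plane_pairs_odd_even:
  assumes "2 * i \<le> n"
  shows "plane_pairs e n i (\<lambda>j. 2 * j - 1) (\<lambda>j. 2 * j)"
proof unfold_locales
  fix j l :: nat
  assume "j \<in> {1..i}"
  then have "1 \<le> j" by simp
  then show "2 * j - 1 \<noteq> 2 * l" by presburger
qed (use assms in \<open>auto simp: inj_on_def\<close>)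

lemma plane_pairs_odd_shifted:
  assumes "2 * i \<le> n"
  shows "plane_pairs e n i (\<lambda>j. 2 * j - 1) (\<lambda>j. if j = 1 then 2 * i else 2 * j - 2)"
proof unfold_locales
  fix j l :: nat
  assume "j \<in> {1..i}"
  then have "1 \<le> j" by simp
  then show "2 * j - 1 \<noteq> (if l = 1 then 2 * i else 2 * l - 2)" by presburger
qed (use assms in \<open>auto simp: inj_on_def\<close>)

lemma adj_rot_invariant_interleaved:
  assumes "\<forall>j\<in>{1..i}. \<forall>t. \<forall>x\<in>F. plane_rot (2 * j - 1) (2 * j) t x \<in> F"
    and "\<forall>j\<in>{2..i}. \<forall>t. \<forall>x\<in>F. plane_rot (2 * j - 1) (2 * j - 2) t x \<in> F"
  shows "adj_rot_invariant (2 * i) F"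
  unfolding adj_rot_invariant_def
proof (intro ballI allI)
  fix k t x assume k: "k \<in> {1..<2 * i}" and x: "x \<in> F"
  show "plane_rot k (Suc k) t x \<in> F"
  proof (cases "odd k")
    case True
    then obtain j where "k = 2 * j - 1" "Suc k = 2 * j" "j \<in> {1..i}"
      using k by (intro that[of "(k + 1) div 2"]) (auto elim!: oddE)
    then show ?thesis using assms(1) x by auto
  next
    case False
    then obtain j where "k = 2 * j - 2" "Suc k = 2 * j - 1" "j \<in> {2..i}"
      using k by (intro that[of "k div 2 + 1"]) (auto elim!: evenE)
    then have "plane_rot (Suc k) k (- t) x \<in> F" using assms(2) x by auto
    then show ?thesis by (simp add: plane_rot_swap)
  qed
qed

lemma plane_rot_odd_even_mem:
  assumes "2 * i \<le> n" "rat_independent_with_pi i \<alpha>" "closed F"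
    and "(\<lambda>x. refl_sub (span ((\<lambda>j. e (2 * j - 1)) ` {1..i}))
      (refl_sub (span ((\<lambda>j. cos (\<alpha> j) *\<^sub>R e (2 * j - 1) + sin (\<alpha> j) *\<^sub>R e (2 * j)) ` {1..i})) x)) ` F = F"
    and "j \<in> {1..i}" "x \<in> F"
  shows "plane_rot (2 * j - 1) (2 * j) t x \<in> F"
proof -
  interpret plane_pairs e n i "\<lambda>j. 2 * j - 1" "\<lambda>j. 2 * j"
    using assms(1) by (rule plane_pairs_odd_even)
  have tilt: "(\<lambda>j. cos (\<alpha> j) *\<^sub>R e (2 * j - 1) + sin (\<alpha> j) *\<^sub>R e (2 * j)) = tilt \<alpha>"
    by (intro ext) (simp only: tilt_def)
  have "torus_rot (\<lambda>j. - 2 * \<alpha> j) ` F = F"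
    using assms(4) unfolding tilt refl_sub_span_p_tilt_eq_torus_rot .
  from closed_plane_rot_mem[OF assms(2,3) this assms(6,5)] show ?thesis by simp
qed

lemma plane_rot_odd_shifted_mem:
  assumes "2 * i \<le> n" "rat_independent_with_pi i \<alpha>" "closed F"
    and "(\<lambda>x. refl_sub (span ((\<lambda>j. e (2 * j - 1)) ` {1..i}))
      (refl_sub (span (insert (cos (\<alpha> 1) *\<^sub>R e 1 + sin (\<alpha> 1) *\<^sub>R e (2 * i))
        ((\<lambda>j. cos (\<alpha> j) *\<^sub>R e (2 * j - 1) + sin (\<alpha> j) *\<^sub>R e (2 * j - 2)) ` {2..i}))) x)) ` F = F"
    and "j \<in> {2..i}" "x \<in> F"
  shows "plane_rot (2 * j - 1) (2 * j - 2) t x \<in> F"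
proof -
  interpret plane_pairs e n i "\<lambda>j. 2 * j - 1" "\<lambda>j. if j = 1 then 2 * i else 2 * j - 2"
    using assms(1) by (rule plane_pairs_odd_shifted)
  have "tilt \<alpha> = (\<lambda>j. cos (\<alpha> j) *\<^sub>R e (2 * j - 1) +
      sin (\<alpha> j) *\<^sub>R e (if j = 1 then 2 * i else 2 * j - 2))"
    by (intro ext) (simp only: tilt_def)
  moreover have "{1..i} = insert 1 {2..i}" using assms(5) by auto
  moreover have "(\<lambda>j. cos (\<alpha> j) *\<^sub>R e (2 * j - 1) +
        sin (\<alpha> j) *\<^sub>R e (if j = 1 then 2 * i else 2 * j - 2)) ` {2..i} =
      (\<lambda>j. cos (\<alpha> j) *\<^sub>R e (2 * j - 1) + sin (\<alpha> j) *\<^sub>R e (2 * j - 2)) ` {2..i}"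
    by (rule image_cong) auto
  ultimately have tilt: "insert (cos (\<alpha> 1) *\<^sub>R e 1 + sin (\<alpha> 1) *\<^sub>R e (2 * i))
      ((\<lambda>j. cos (\<alpha> j) *\<^sub>R e (2 * j - 1) + sin (\<alpha> j) *\<^sub>R e (2 * j - 2)) ` {2..i}) = tilt \<alpha> ` {1..i}"
    by simp
  have "torus_rot (\<lambda>j. - 2 * \<alpha> j) ` F = F"
    using assms(4) unfolding tilt refl_sub_span_p_tilt_eq_torus_rot .
  moreover have "j \<in> {1..i}" "j \<noteq> 1" using assms(5) by auto
  ultimately show ?thesis
    using closed_plane_rot_mem[OF assms(2,3) _ assms(6), where j = j and t = t] by simp
qed

end

theorem lemma3p6:
  fixes e :: "nat \<Rightarrow> 'a::euclidean_space"
    and n i :: nat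
    and \<alpha> :: "nat \<Rightarrow> real"
    and E :: "'a set"
  assumes dim: "DIM('a) = n"
    and i2: "2 \<le> i" and in2: "2 * i \<le> n"
    and onb_norm: "\<forall>k\<in>{1..n}. norm (e k) = 1"
    and onb_orth: "\<forall>k\<in>{1..n}. \<forall>l\<in>{1..n}. k \<noteq> l \<longrightarrow> e k \<bullet> e l = 0"
    and \<alpha>_pos: "0 < \<alpha> 1"
    and \<alpha>_mono: "\<forall>j\<in>{1..<i}. \<alpha> j < \<alpha> (Suc j)"
    and \<alpha>_lt: "\<alpha> i < pi / 2"
    and lin_indep: "\<forall>(c0::rat) (c::nat \<Rightarrow> rat).
        of_rat c0 * pi + (\<Sum>j=1..i. of_rat (c j) * \<alpha> j) = 0 \<longrightarrow>
        c0 = 0 \<and> (\<forall>j\<in>{1..i}. c j = 0)"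
    and H1_def: "H1 = span ((\<lambda>j. e (2 * j - 1)) ` {1..i})"
    and H2_def: "H2 = span ((\<lambda>j. cos (\<alpha> j) *\<^sub>R e (2 * j - 1) + sin (\<alpha> j) *\<^sub>R e (2 * j)) ` {1..i})"
    and H3_def: "H3 = span (insert (cos (\<alpha> 1) *\<^sub>R e 1 + sin (\<alpha> 1) *\<^sub>R e (2 * i))
        ((\<lambda>j. cos (\<alpha> j) *\<^sub>R e (2 * j - 1) + sin (\<alpha> j) *\<^sub>R e (2 * j - 2)) ` {2..i}))"
    and E_sub: "E \<subseteq> sphere 0 1"
    and E_ne: "E \<noteq> {}"
    and E_closed: "closed E"
    and E_inv: "(\<forall>H\<in>{H1, H2, H3}. refl_sub H ` E = E) \<or>
                (\<forall>H\<in>{H1, H2, H3}. refl_sub (orthogonal_comp H) ` E = E)"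
  shows "\<forall>x\<in>E. sphere 0 1 \<inter> {v + x | v. v \<in> span (e ` {1..2 * i})} \<subseteq> E"
proof -
  interpret orthonormal_frame e n
    using dim onb_norm onb_orth by unfold_locales
  have indep: "rat_independent_with_pi i \<alpha>"
    using lin_indep unfolding rat_independent_with_pi_def .
  have inv: "(\<lambda>x. refl_sub H1 (refl_sub H x)) ` E = E" if "H \<in> {H2, H3}" for H
  proof (rule image_refl_sub_comp_eq)
    show "subspace H1" "subspace H" using that by (auto simp: H1_def H2_def H3_def)
    show "(refl_sub H1 ` E = E \<and> refl_sub H ` E = E) \<or>
        (refl_sub (orthogonal_comp H1) ` E = E \<and> refl_sub (orthogonal_comp H) ` E = E)"
      using E_inv that by blast
  qed
  have "adj_rot_invariant (2 * i) E"
    using plane_rot_odd_even_mem[OF in2 indep E_closed inv[of H2, unfolded H1_def H2_def]]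
      plane_rot_odd_shifted_mem[OF in2 indep E_closed inv[of H3, unfolded H1_def H3_def]]
    by (intro adj_rot_invariant_interleaved) auto
  show ?thesis
  proof (intro ballI subsetI)
    fix x y assume x: "x \<in> E" and y: "y \<in> sphere 0 1 \<inter> {v + x | v. v \<in> span (e ` {1..2 * i})}"
    then have "norm y = norm x" "y - x \<in> span (e ` {1..2 * i})"
      using E_sub by auto
    with i2 show "y \<in> E"
      using adj_rot_invariant_slice[OF _ in2 \<open>adj_rot_invariant (2 * i) E\<close> x] by simp
  qed
qed

end
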